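(* Let $b\ge2$, $d\ge1$, $\Lambda_b=\{0,1,\dots,b-1\}^d$, and let $T$ be a supercritical Galton–Watson tree with alphabet $\Lambda_b$ and binomial offspring distribution with parameter $p$. For $k\ge2$ let $\mathscr{D}_{b,k}=\{X\subseteq(\Lambda_b)^k:\exists a\in(\Lambda_b)^{k-2},\ a(\Lambda_b)^2\subseteq X\}$ and $g_{\mathscr{D}_{b,k}}(s)=\mathbb{P}(T_k^{(s)}\notin\mathscr{D}_{b,k})$. Then for every $s\in(0,1)$, $g_{\mathscr{D}_{b,k}}(s)\to\mathbb{P}(\text{extinction})$ as $k\to\infty$.
   Context: The Galton–Watson tree with offspring distribution $W$, where $\mathbb{P}(W=B)=p^{|B|}(1-p)^{|\Lambda_b\setminus B|}$ for $B\subseteq\Lambda_b$, is $T_0=\{\emptyset\}$, $T_n=\{aj:a\in T_{n-1},j\in W_a\}$ with independent copies $W_a$; supercritical means $pb^d>1$; extinction means $T_n=\emptyset$ for some $n$. $a(\Lambda_b)^2=\{aj:j\in(\Lambda_b)^2\}$. $T_k^{(s)}=T_k\cap Y$ with $Y\subseteq(\Lambda_b)^k$ independent of $T$, $\mathbb{P}(Y=B)=(1-s)^{|B|}s^{|(\Lambda_b)^k\setminus B|}$. *)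

theory Defs
  imports "HOL-Probability.Probability"
begin

definition alphabet :: "nat \<Rightarrow> nat \<Rightarrow> nat list set" where
  "alphabet b d = {x. length x = d \<and> set x \<subseteq> {..<b}}"

definition words :: "nat \<Rightarrow> nat \<Rightarrow> nat \<Rightarrow> nat list list set" where
  "words b d k = {w. length w = k \<and> set w \<subseteq> alphabet b d}"

text \<open>Probability space of the tree: an independent Bernoulli(p) coin for every word a j,
  so that W_a = {j in Lambda_b. coin (a @ [j])} are independent copies of W with
  P(W = B) = p^|B| (1-p)^|Lambda_b - B|.\<close>
definition gw_space :: "real \<Rightarrow> (nat list list \<Rightarrow> bool) measure" where
  "gw_space p = PiM UNIV (\<lambda>_. measure_pmf (bernoulli_pmf p))"

fun gw_gen :: "nat \<Rightarrow> nat \<Rightarrow> (nat list list \<Rightarrow> bool) \<Rightarrow> nat \<Rightarrow> nat list list set" where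
  "gw_gen b d \<omega> 0 = {[]}"
| "gw_gen b d \<omega> (Suc n) =
     {a @ [j] | a j. a \<in> gw_gen b d \<omega> n \<and> j \<in> alphabet b d \<and> \<omega> (a @ [j])}"

definition extinction_prob :: "nat \<Rightarrow> nat \<Rightarrow> real \<Rightarrow> real" where
  "extinction_prob b d p = measure (gw_space p) {\<omega>. \<exists>n. gw_gen b d \<omega> n = {}}"

text \<open>Random subset Y of (Lambda_b)^k, independent of T: each word kept independently
  with probability 1-s, so P(Y = B) = (1-s)^|B| s^|(Lambda_b)^k - B|.\<close>
definition Y_space :: "real \<Rightarrow> (nat list list \<Rightarrow> bool) measure" where
  "Y_space s = PiM UNIV (\<lambda>_. measure_pmf (bernoulli_pmf (1 - s)))"

definition Yset :: "nat \<Rightarrow> nat \<Rightarrow> nat \<Rightarrow> (nat list list \<Rightarrow> bool) \<Rightarrow> nat list list set" where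
  "Yset b d k \<eta> = {w \<in> words b d k. \<eta> w}"

definition Dfam :: "nat \<Rightarrow> nat \<Rightarrow> nat \<Rightarrow> nat list list set set" where
  "Dfam b d k = {X. X \<subseteq> words b d k \<and>
      (\<exists>a \<in> words b d (k - 2). {a @ v | v. v \<in> words b d 2} \<subseteq> X)}"

definition gD :: "nat \<Rightarrow> nat \<Rightarrow> real \<Rightarrow> nat \<Rightarrow> real \<Rightarrow> real" where
  "gD b d p k s = measure (gw_space p \<Otimes>\<^sub>M Y_space s)
      {(\<omega>, \<eta>). gw_gen b d \<omega> k \<inter> Yset b d k \<eta> \<notin> Dfam b d k}"

end

theory Submission
  imports Defs
begin

text \<open>
  Both "T is extinct
  by generation n" and "T_k^(s) contains no block a (Lambda_b)^2" hold exactly when the same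
  event, one level lower, holds for the subtree of every child of the root that is born. These
  subtrees are independent copies of the whole configuration, so both probabilities are iterates
  of the offspring generating function f(x) = (1 - p + p x)^(b^d): extinction by generation n has
  probability f^n(0), and g_D at level k + 2 is f^k applied to its value at level 2, which is
  below 1. As f is strictly convex with f'(1) = p b^d > 1, it has only one fixed point below 1
  and lies below the diagonal between that point and 1; hence the iterates of every starting
  point in [0,1) converge to the limit of f^n(0), the extinction probability.
\<close>

section \<open>Independent coins indexed by words\<close>

definition bernoulli_field :: "real \<Rightarrow> ('a list \<Rightarrow> bool) measure" where
  "bernoulli_field q = PiM UNIV (\<lambda>_. measure_pmf (bernoulli_pmf q))"

definition subtree :: "'a \<Rightarrow> ('a list \<Rightarrow> 'b) \<Rightarrow> 'a list \<Rightarrow> 'b" where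
  "subtree j \<omega> = (\<lambda>w. \<omega> (j # w))"

lemma space_bernoulli_field [simp]: "space (bernoulli_field q) = UNIV"
  by (simp add: bernoulli_field_def space_PiM)

lemma prob_space_bernoulli_field: "prob_space (bernoulli_field q)"
  unfolding bernoulli_field_def by (intro prob_space_PiM) (simp add: prob_space_measure_pmf)

lemma UNIV_in_sets_bernoulli_field [simp]: "UNIV \<in> sets (bernoulli_field q)"
  using sets.top[of "bernoulli_field q"] by simp

lemma emeasure_bernoulli_field_UNIV [simp]: "emeasure (bernoulli_field q) UNIV = 1"
  using prob_space.emeasure_space_1[OF prob_space_bernoulli_field] by simp

lemma measurable_subtree [measurable]:
  "subtree j \<in> measurable (bernoulli_field q) (bernoulli_field q)"
  unfolding bernoulli_field_def subtree_def
  by (intro measurable_PiM_single') (auto simp: space_PiM)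

lemma measurable_bernoulli_field_component:
  "(\<lambda>\<omega>. \<omega> w) \<in> measurable (bernoulli_field q) (measure_pmf (bernoulli_pmf q))"
  unfolding bernoulli_field_def by (rule measurable_component_singleton) simp

lemma measurable_bernoulli_field_component_count_space [measurable]:
  "(\<lambda>\<omega>. \<omega> w) \<in> measurable (bernoulli_field q) (count_space UNIV)"
proof -
  have "measurable (bernoulli_field q) (measure_pmf (bernoulli_pmf q))
      = measurable (bernoulli_field q) (count_space UNIV)"
    by (rule measurable_cong_sets) auto
  then show ?thesis
    using measurable_bernoulli_field_component by simp
qed

lemma sets_bernoulli_field_cylinder:
  assumes "finite W"
  shows "{\<omega>. \<forall>w\<in>W. \<omega> w} \<in> sets (bernoulli_field q)"
proof -
  have "Measurable.pred (bernoulli_field q) (\<lambda>\<omega>. \<forall>w\<in>W. \<omega> w)"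
    using assms by measurable
  then show ?thesis
    by (simp add: pred_def)
qed

lemma emeasure_bernoulli_field_cylinder:
  assumes "finite W" and "0 \<le> q" "q \<le> 1"
  shows "emeasure (bernoulli_field q :: ('a list \<Rightarrow> bool) measure) {\<omega>. \<forall>w\<in>W. \<omega> w} = ennreal q ^ card W"
proof -
  interpret product_prob_space "\<lambda>_. measure_pmf (bernoulli_pmf q)" "UNIV :: 'a list set"
    by unfold_locales
  have "emeasure (bernoulli_field q :: ('a list \<Rightarrow> bool) measure) {\<omega>. \<forall>w\<in>W. \<omega> w}
      = emeasure (PiM UNIV (\<lambda>_::'a list. measure_pmf (bernoulli_pmf q)))
          {\<omega> \<in> space (PiM UNIV (\<lambda>_. measure_pmf (bernoulli_pmf q))). \<forall>w\<in>W. \<omega> w \<in> {True}}"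
    by (simp add: bernoulli_field_def space_PiM)
  also have "\<dots> = (\<Prod>w\<in>W. emeasure (measure_pmf (bernoulli_pmf q)) {True})"
    using assms(1) by (intro emeasure_PiM_Collect) auto
  finally show ?thesis
    using assms(2,3) by (simp add: emeasure_pmf_single)
qed

lemma distr_subtree: "distr (bernoulli_field q) (bernoulli_field q) (subtree j) = bernoulli_field q"
proof -
  have "distr (PiM UNIV (\<lambda>_. measure_pmf (bernoulli_pmf q))) (PiM UNIV (\<lambda>_. measure_pmf (bernoulli_pmf q)))
      (\<lambda>\<omega>. \<lambda>w\<in>UNIV. \<omega> (j # w)) = PiM UNIV (\<lambda>_. measure_pmf (bernoulli_pmf q))"
    by (rule distr_PiM_reindex) (auto simp: prob_space_measure_pmf inj_on_def)
  then show ?thesis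
    by (simp add: subtree_def[abs_def] bernoulli_field_def restrict_UNIV)
qed

lemma indep_vars_bernoulli_field_components:
  "prob_space.indep_vars (bernoulli_field q) (\<lambda>_. measure_pmf (bernoulli_pmf q)) (\<lambda>w \<omega>. \<omega> w) UNIV"
proof -
  interpret prob_space "bernoulli_field q" by (rule prob_space_bernoulli_field)
  have component: "distr (bernoulli_field q) (measure_pmf (bernoulli_pmf q)) (\<lambda>\<omega>. \<omega> w)
      = measure_pmf (bernoulli_pmf q)" for w
    unfolding bernoulli_field_def by (rule distr_PiM_component) (simp_all add: prob_space_measure_pmf)
  have "distr (bernoulli_field q) (PiM UNIV (\<lambda>_. measure_pmf (bernoulli_pmf q))) (\<lambda>\<omega>. \<lambda>w\<in>UNIV. \<omega> w)
      = PiM UNIV (\<lambda>w. distr (bernoulli_field q) (measure_pmf (bernoulli_pmf q)) (\<lambda>\<omega>. \<omega> w))"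
    unfolding component restrict_UNIV by (simp add: distr_id flip: bernoulli_field_def)
  then show ?thesis
    by (subst indep_vars_iff_distr_eq_PiM) (simp_all add: measurable_bernoulli_field_component)
qed

lemma indep_vars_subtree: "prob_space.indep_vars (bernoulli_field q) (\<lambda>_. bernoulli_field q) subtree L"
proof -
  interpret prob_space "bernoulli_field q" by (rule prob_space_bernoulli_field)
  define K where "K j = range (Cons j)" for j :: 'a
  have "indep_vars (\<lambda>j. PiM (K j) (\<lambda>_. measure_pmf (bernoulli_pmf q))) (\<lambda>j \<omega>. restrict \<omega> (K j)) L"
    by (rule indep_vars_restrict[OF indep_vars_bernoulli_field_components])
      (auto simp: K_def disjoint_family_on_def)
  then have "indep_vars (\<lambda>_. bernoulli_field q) (\<lambda>j \<omega>. subtree j (restrict \<omega> (K j))) L"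
  proof (rule indep_vars_compose2)
    fix j
    show "subtree j \<in> measurable (PiM (K j) (\<lambda>_. measure_pmf (bernoulli_pmf q))) (bernoulli_field q)"
      unfolding bernoulli_field_def subtree_def
      by (intro measurable_PiM_single' measurable_component_singleton) (auto simp: K_def space_PiM)
  qed
  then show ?thesis
    by (rule indep_vars_cong[THEN iffD1, rotated 3]) (auto simp: K_def subtree_def fun_eq_iff)
qed

lemma nn_integral_prod_subtree:
  assumes "finite L" and [measurable]: "\<And>j. j \<in> L \<Longrightarrow> g j \<in> borel_measurable (bernoulli_field q)"
  shows "(\<integral>\<^sup>+\<omega>. (\<Prod>j\<in>L. g j (subtree j \<omega>)) \<partial>bernoulli_field q)
    = (\<Prod>j\<in>L. \<integral>\<^sup>+\<omega>. g j \<omega> \<partial>bernoulli_field q)"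
proof -
  interpret prob_space "bernoulli_field q" by (rule prob_space_bernoulli_field)
  have "indep_vars (\<lambda>_. borel) (\<lambda>j \<omega>. g j (subtree j \<omega>)) L"
    using indep_vars_subtree by (rule indep_vars_compose2) measurable
  then have "(\<integral>\<^sup>+\<omega>. (\<Prod>j\<in>L. g j (subtree j \<omega>)) \<partial>bernoulli_field q)
      = (\<Prod>j\<in>L. \<integral>\<^sup>+\<omega>. g j (subtree j \<omega>) \<partial>bernoulli_field q)"
    using indep_vars_nn_integral[OF \<open>finite L\<close>] by simp
  also have "\<dots> = (\<Prod>j\<in>L. \<integral>\<^sup>+\<omega>. g j \<omega> \<partial>distr (bernoulli_field q) (bernoulli_field q) (subtree j))"
    by (intro prod.cong refl nn_integral_distr[symmetric]) auto
  finally show ?thesis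
    by (simp add: distr_subtree)
qed

lemma emeasure_subtrees_in:
  assumes "finite L" and sets: "\<And>j. j \<in> L \<Longrightarrow> C j \<in> sets (bernoulli_field q)"
  shows "emeasure (bernoulli_field q) {\<eta>. \<forall>j\<in>L. subtree j \<eta> \<in> C j}
    = (\<Prod>j\<in>L. emeasure (bernoulli_field q) (C j))"
proof -
  have indicator_eq: "indicator {\<eta>. \<forall>j\<in>L. subtree j \<eta> \<in> C j} \<eta>
      = (\<Prod>j\<in>L. indicator (C j) (subtree j \<eta>) :: ennreal)" for \<eta>
    using \<open>finite L\<close> by (auto simp: indicator_def prod_zero_iff)
  have "{\<eta>. \<forall>j\<in>L. subtree j \<eta> \<in> C j} \<in> sets (bernoulli_field q)"
  proof -
    have "Measurable.pred (bernoulli_field q) (\<lambda>\<eta>. \<forall>j\<in>L. subtree j \<eta> \<in> C j)"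
      using \<open>finite L\<close> sets by measurable
    then show ?thesis by (simp add: pred_def)
  qed
  then have "emeasure (bernoulli_field q) {\<eta>. \<forall>j\<in>L. subtree j \<eta> \<in> C j}
      = (\<integral>\<^sup>+\<eta>. (\<Prod>j\<in>L. indicator (C j) (subtree j \<eta>)) \<partial>bernoulli_field q)"
    by (simp flip: indicator_eq)
  also have "\<dots> = (\<Prod>j\<in>L. emeasure (bernoulli_field q) (C j))"
    using sets by (subst nn_integral_prod_subtree[OF \<open>finite L\<close>]) auto
  finally show ?thesis .
qed

lemma nn_integral_bernoulli_field_root_split:
  assumes [measurable]: "G \<in> borel_measurable (bernoulli_field q)"
  shows "integral\<^sup>N (bernoulli_field q) G
    = (\<integral>\<^sup>+x. \<integral>\<^sup>+X. G (X(Nil := x)) \<partial>PiM (UNIV - {[]}) (\<lambda>_. measure_pmf (bernoulli_pmf q))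
        \<partial>measure_pmf (bernoulli_pmf q))"
proof -
  define N where "N = measure_pmf (bernoulli_pmf q)"
  define P where "P = PiM (UNIV - {[]}) (\<lambda>_::'a list. N)"
  interpret P: prob_space P
    unfolding P_def by (rule prob_space_PiM) (simp add: N_def prob_space_measure_pmf)
  have "(\<lambda>z. (snd z)(Nil := fst z)) \<in> measurable (N \<Otimes>\<^sub>M P) (bernoulli_field q)"
    unfolding bernoulli_field_def N_def[symmetric] P_def
    by (rule measurable_fun_upd[where J="UNIV - {[]}"]) auto
  then have [measurable]: "(\<lambda>(x, X). X(Nil := x)) \<in> measurable (N \<Otimes>\<^sub>M P) (bernoulli_field q)"
    by (simp add: case_prod_unfold)
  have "distr (N \<Otimes>\<^sub>M P) (bernoulli_field q) (\<lambda>(x, X). X(Nil := x)) = bernoulli_field q"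
    using distr_pair_PiM_eq_PiM[of "UNIV - {[]}" "\<lambda>_. N" "[]"]
    by (simp add: bernoulli_field_def insert_absorb N_def P_def prob_space_measure_pmf)
  then have "integral\<^sup>N (bernoulli_field q) G
      = integral\<^sup>N (distr (N \<Otimes>\<^sub>M P) (bernoulli_field q) (\<lambda>(x, X). X(Nil := x))) G"
    by simp
  also have "\<dots> = (\<integral>\<^sup>+z. G ((\<lambda>(x, X). X(Nil := x)) z) \<partial>(N \<Otimes>\<^sub>M P))"
    by (rule nn_integral_distr) simp_all
  also have "\<dots> = (\<integral>\<^sup>+x. \<integral>\<^sup>+X. G (X(Nil := x)) \<partial>P \<partial>N)"
    using P.nn_integral_fst[symmetric, of "\<lambda>z. G ((\<lambda>(x, X). X(Nil := x)) z)" N] by simp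
  finally show ?thesis
    by (simp add: N_def P_def)
qed

lemma nn_integral_if_root:
  fixes F :: "('a list \<Rightarrow> bool) \<Rightarrow> ennreal"
  assumes q: "0 \<le> q" "q \<le> 1" and [measurable]: "F \<in> borel_measurable (bernoulli_field q)"
    and root_invariant: "\<And>w c. F (w(Nil := c)) = F w"
  shows "(\<integral>\<^sup>+\<omega>. (if \<omega> [] then F \<omega> else 1) \<partial>bernoulli_field q)
    = ennreal (1 - q) + ennreal q * (\<integral>\<^sup>+\<omega>. F \<omega> \<partial>bernoulli_field q)"
proof -
  define N where "N = measure_pmf (bernoulli_pmf q)"
  define P where "P = PiM (UNIV - {[]}) (\<lambda>_::'a list. N)"
  interpret N: prob_space N
    unfolding N_def by (rule prob_space_measure_pmf)
  interpret P: prob_space P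
    unfolding P_def by (rule prob_space_PiM) (simp add: N_def prob_space_measure_pmf)
  define F0 where "F0 X = F (X(Nil := False))" for X
  define C where "C = (\<integral>\<^sup>+X. F0 X \<partial>P)"
  have F_upd: "F (X(Nil := x)) = F0 X" for X x
    by (metis F0_def fun_upd_upd root_invariant)
  have "(\<integral>\<^sup>+\<omega>. F \<omega> \<partial>bernoulli_field q) = (\<integral>\<^sup>+x. C \<partial>N)"
    by (simp add: nn_integral_bernoulli_field_root_split F_upd C_def N_def P_def)
  also have "\<dots> = C"
    by (simp add: N.emeasure_space_1)
  finally have C_eq: "C = (\<integral>\<^sup>+\<omega>. F \<omega> \<partial>bernoulli_field q)" ..
  have "(\<integral>\<^sup>+X. (if x then F (X(Nil := x)) else 1) \<partial>P) = (if x then C else 1)" for x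
    by (cases x) (simp_all add: F_upd C_def P.emeasure_space_1)
  then have "(\<integral>\<^sup>+\<omega>. (if \<omega> [] then F \<omega> else 1) \<partial>bernoulli_field q) = (\<integral>\<^sup>+x. (if x then C else 1) \<partial>N)"
    by (subst nn_integral_bernoulli_field_root_split) (simp_all add: N_def P_def)
  also have "\<dots> = ennreal (1 - q) + ennreal q * C"
    unfolding N_def using q
    by (subst nn_integral_measure_pmf_support[where A=UNIV]) (auto simp: UNIV_bool mult.commute)
  finally show ?thesis
    by (simp add: C_eq)
qed

definition branch_event ::
  "'a set \<Rightarrow> (('a list \<Rightarrow> bool) \<times> ('a list \<Rightarrow> bool)) set \<Rightarrow> (('a list \<Rightarrow> bool) \<times> ('a list \<Rightarrow> bool)) set"
  where "branch_event L E = {(\<omega>, \<eta>). \<forall>j\<in>L. \<omega> [j] \<longrightarrow> (subtree j \<omega>, subtree j \<eta>) \<in> E}"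

lemma sets_branch_event:
  assumes "finite L" and [measurable]: "E \<in> sets (bernoulli_field p \<Otimes>\<^sub>M bernoulli_field q)"
  shows "branch_event L E \<in> sets (bernoulli_field p \<Otimes>\<^sub>M bernoulli_field q)"
proof -
  have "Measurable.pred (bernoulli_field p \<Otimes>\<^sub>M bernoulli_field q)
      (\<lambda>z. \<forall>j\<in>L. fst z [j] \<longrightarrow> (subtree j (fst z), subtree j (snd z)) \<in> E)"
    using \<open>finite L\<close> by measurable
  then show ?thesis
    by (simp add: pred_def space_pair_measure branch_event_def case_prod_unfold)
qed

text \<open>The coin \<omega> [j] deciding whether child j is born is the root coin of subtree j \<omega>;
  as E ignores root coins, it is independent of the event E for that subtree.\<close>
lemma emeasure_branch_event:
  fixes L :: "'a set"
  assumes "finite L" and p: "0 \<le> p" "p \<le> 1"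
    and E [measurable]: "E \<in> sets (bernoulli_field p \<Otimes>\<^sub>M bernoulli_field q)"
    and root_invariant: "\<And>w c \<eta>. (w(Nil := c), \<eta>) \<in> E \<longleftrightarrow> (w, \<eta>) \<in> E"
  shows "emeasure (bernoulli_field p \<Otimes>\<^sub>M bernoulli_field q) (branch_event L E)
    = (ennreal (1 - p) + ennreal p * emeasure (bernoulli_field p \<Otimes>\<^sub>M bernoulli_field q) E) ^ card L"
proof -
  interpret Q: prob_space "bernoulli_field q :: ('a list \<Rightarrow> bool) measure"
    by (rule prob_space_bernoulli_field)
  define F where "F \<omega> = emeasure (bernoulli_field q) (Pair \<omega> -` E)" for \<omega>
  have [measurable]: "F \<in> borel_measurable (bernoulli_field p)"
    unfolding F_def[abs_def] by (rule Q.measurable_emeasure_Pair[OF E])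
  define h where "h \<omega> = (if \<omega> [] then F \<omega> else 1)" for \<omega>
  have fibre: "emeasure (bernoulli_field q) (Pair \<omega> -` branch_event L E) = (\<Prod>j\<in>L. h (subtree j \<omega>))"
    for \<omega>
  proof -
    have fibre_eq: "Pair \<omega> -` branch_event L E
        = {\<eta>. \<forall>j\<in>L. subtree j \<eta> \<in> (if \<omega> [j] then Pair (subtree j \<omega>) -` E else UNIV)}"
      by (auto simp: branch_event_def)
    have "emeasure (bernoulli_field q) (Pair \<omega> -` branch_event L E)
        = (\<Prod>j\<in>L. emeasure (bernoulli_field q) (if \<omega> [j] then Pair (subtree j \<omega>) -` E else UNIV))"
      unfolding fibre_eq by (rule emeasure_subtrees_in[OF \<open>finite L\<close>]) (simp add: sets_Pair1)
    also have "\<dots> = (\<Prod>j\<in>L. h (subtree j \<omega>))"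
      by (intro prod.cong) (simp_all add: h_def F_def subtree_def)
    finally show ?thesis .
  qed
  have "emeasure (bernoulli_field p \<Otimes>\<^sub>M bernoulli_field q) (branch_event L E)
      = (\<integral>\<^sup>+\<omega>. (\<Prod>j\<in>L. h (subtree j \<omega>)) \<partial>bernoulli_field p)"
    using \<open>finite L\<close> by (simp add: Q.emeasure_pair_measure_alt sets_branch_event fibre)
  also have "\<dots> = (\<Prod>j\<in>L. \<integral>\<^sup>+\<omega>. h \<omega> \<partial>bernoulli_field p)"
    unfolding h_def using \<open>finite L\<close> by (intro nn_integral_prod_subtree) measurable
  also have "(\<integral>\<^sup>+\<omega>. h \<omega> \<partial>bernoulli_field p) = ennreal (1 - p) + ennreal p * (\<integral>\<^sup>+\<omega>. F \<omega> \<partial>bernoulli_field p)"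
    unfolding h_def using p by (rule nn_integral_if_root) (simp_all add: F_def vimage_def root_invariant)
  finally show ?thesis
    by (simp add: F_def Q.emeasure_pair_measure_alt)
qed

lemma measure_branch_event:
  assumes "finite L" and p: "0 \<le> p" "p \<le> 1"
    and E: "E \<in> sets (bernoulli_field p \<Otimes>\<^sub>M bernoulli_field q)"
    and root_invariant: "\<And>w c \<eta>. (w(Nil := c), \<eta>) \<in> E \<longleftrightarrow> (w, \<eta>) \<in> E"
  shows "measure (bernoulli_field p \<Otimes>\<^sub>M bernoulli_field q) (branch_event L E)
    = (1 - p + p * measure (bernoulli_field p \<Otimes>\<^sub>M bernoulli_field q) E) ^ card L"
proof -
  interpret prob_space "bernoulli_field p \<Otimes>\<^sub>M bernoulli_field q :: (('a list \<Rightarrow> bool) \<times> ('a list \<Rightarrow> bool)) measure"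
    by (intro prob_space_pair prob_space_bernoulli_field)
  have "0 \<le> 1 - p + p * prob E"
    using p by simp
  moreover have "ennreal (prob (branch_event L E)) = ennreal ((1 - p + p * prob E) ^ card L)"
    using emeasure_branch_event[OF assms] p \<open>0 \<le> 1 - p + p * prob E\<close>
    by (simp add: emeasure_eq_measure ennreal_power flip: ennreal_mult ennreal_plus)
  ultimately show ?thesis
    by simp
qed

section \<open>Generations of the tree\<close>

lemma finite_alphabet: "finite (alphabet b d)"
  using finite_lists_length_eq[of "{..<b}" d] by (simp add: alphabet_def conj_commute)

lemma card_alphabet: "card (alphabet b d) = b ^ d"
  using card_lists_length_eq[of "{..<b}" d] by (simp add: alphabet_def conj_commute)

lemma finite_words: "finite (words b d n)"
  using finite_lists_length_eq[OF finite_alphabet, of b d n] by (simp add: words_def conj_commute)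

lemma words_0: "words b d 0 = {[]}"
  by (auto simp: words_def)

lemma Cons_in_words_Suc_iff: "j # v \<in> words b d (Suc n) \<longleftrightarrow> j \<in> alphabet b d \<and> v \<in> words b d n"
  by (auto simp: words_def)

lemma Nil_notin_gw_gen_Suc: "[] \<notin> gw_gen b d \<omega> (Suc n)"
  by simp

lemma gw_gen_fun_upd_Nil: "gw_gen b d (w(Nil := c)) n = gw_gen b d w n"
  by (induction n) auto

lemma Cons_in_gw_gen_Suc_iff:
  "j # v \<in> gw_gen b d \<omega> (Suc n) \<longleftrightarrow> j \<in> alphabet b d \<and> \<omega> [j] \<and> v \<in> gw_gen b d (subtree j \<omega>) n"
proof (induction n arbitrary: v)
  case 0
  then show ?case by auto
next
  case (Suc n)
  show ?case
  proof (cases v rule: rev_cases)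
    case Nil
    then show ?thesis
      by (simp del: gw_gen.simps add: gw_gen.simps(2)[of b d \<omega> "Suc n"] Nil_notin_gw_gen_Suc)
  next
    case (snoc a k)
    then show ?thesis
      using Suc.IH[of a] by (auto simp: subtree_def Cons_eq_append_conv)
  qed
qed

lemma gw_gen_Suc_eq_empty_iff:
  "gw_gen b d \<omega> (Suc n) = {} \<longleftrightarrow> (\<forall>j\<in>alphabet b d. \<omega> [j] \<longrightarrow> gw_gen b d (subtree j \<omega>) n = {})"
proof -
  have "gw_gen b d \<omega> (Suc n) \<noteq> {} \<longleftrightarrow> (\<exists>j v. j # v \<in> gw_gen b d \<omega> (Suc n))"
    by (metis Nil_notin_gw_gen_Suc all_not_in_conv neq_Nil_conv)
  then show ?thesis
    by (auto simp: Cons_in_gw_gen_Suc_iff simp del: gw_gen.simps)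
qed

lemma words_nonempty: "1 \<le> b \<Longrightarrow> replicate n (replicate d 0) \<in> words b d n"
  by (auto simp: words_def alphabet_def)

lemma words_Suc: "words b d (Suc n) = (\<lambda>(j, a). j # a) ` (alphabet b d \<times> words b d n)"
  by (auto simp: words_def length_Suc_conv)

lemma bex_words_Suc:
  "(\<exists>a\<in>words b d (Suc n). P a) \<longleftrightarrow> (\<exists>j\<in>alphabet b d. \<exists>a\<in>words b d n. P (j # a))"
  by (auto simp: words_Suc)

lemma ball_words_Suc:
  "(\<forall>a\<in>words b d (Suc n). P a) \<longleftrightarrow> (\<forall>j\<in>alphabet b d. \<forall>a\<in>words b d n. P (j # a))"
  by (auto simp: words_Suc)

definition thinned_gen ::
  "nat \<Rightarrow> nat \<Rightarrow> nat \<Rightarrow> (nat list list \<Rightarrow> bool) \<Rightarrow> (nat list list \<Rightarrow> bool) \<Rightarrow> nat list list set"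
  where "thinned_gen b d k \<omega> \<eta> = gw_gen b d \<omega> k \<inter> Yset b d k \<eta>"

lemma thinned_gen_subset_words: "thinned_gen b d k \<omega> \<eta> \<subseteq> words b d k"
  by (auto simp: thinned_gen_def Yset_def)

lemma Cons_in_thinned_gen_Suc_iff:
  "j # v \<in> thinned_gen b d (Suc k) \<omega> \<eta>
    \<longleftrightarrow> j \<in> alphabet b d \<and> \<omega> [j] \<and> v \<in> thinned_gen b d k (subtree j \<omega>) (subtree j \<eta>)"
  by (auto simp: thinned_gen_def Yset_def Cons_in_gw_gen_Suc_iff Cons_in_words_Suc_iff subtree_def
      simp del: gw_gen.simps)

lemma Nil_in_thinned_gen_0_iff: "[] \<in> thinned_gen b d 0 \<omega> \<eta> \<longleftrightarrow> \<eta> []"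
  by (simp add: thinned_gen_def Yset_def words_0)

lemma thinned_gen_in_Dfam_iff:
  "thinned_gen b d k \<omega> \<eta> \<in> Dfam b d k
    \<longleftrightarrow> (\<exists>a\<in>words b d (k - 2). \<forall>v\<in>words b d 2. a @ v \<in> thinned_gen b d k \<omega> \<eta>)"
proof -
  have "{a @ v |v. v \<in> words b d 2} \<subseteq> X \<longleftrightarrow> (\<forall>v\<in>words b d 2. a @ v \<in> X)" for a X
    by blast
  then show ?thesis
    by (simp add: Dfam_def thinned_gen_subset_words)
qed

lemma thinned_gen_in_Dfam_Suc_iff:
  assumes "2 \<le> k" and "1 \<le> b"
  shows "thinned_gen b d (Suc k) \<omega> \<eta> \<in> Dfam b d (Suc k)
    \<longleftrightarrow> (\<exists>j\<in>alphabet b d. \<omega> [j] \<and> thinned_gen b d k (subtree j \<omega>) (subtree j \<eta>) \<in> Dfam b d k)"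
proof -
  obtain m where k: "k = Suc (Suc m)"
    using \<open>2 \<le> k\<close> by (metis add_2_eq_Suc le_Suc_ex)
  have "words b d 2 \<noteq> {}"
    using words_nonempty[OF \<open>1 \<le> b\<close>] by blast
  then show ?thesis
    unfolding thinned_gen_in_Dfam_iff k
    by (simp add: bex_words_Suc Cons_in_thinned_gen_Suc_iff) blast
qed

definition not_D_event :: "nat \<Rightarrow> nat \<Rightarrow> nat \<Rightarrow> ((nat list list \<Rightarrow> bool) \<times> (nat list list \<Rightarrow> bool)) set"
  where "not_D_event b d k = {(\<omega>, \<eta>). thinned_gen b d k \<omega> \<eta> \<notin> Dfam b d k}"

lemma not_D_event_Suc:
  "2 \<le> k \<Longrightarrow> 1 \<le> b \<Longrightarrow> not_D_event b d (Suc k) = branch_event (alphabet b d) (not_D_event b d k)"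
  by (auto simp: not_D_event_def branch_event_def thinned_gen_in_Dfam_Suc_iff)

lemma fun_upd_Nil_in_not_D_event_iff: "(w(Nil := c), \<eta>) \<in> not_D_event b d k \<longleftrightarrow> (w, \<eta>) \<in> not_D_event b d k"
  by (simp add: not_D_event_def thinned_gen_def gw_gen_fun_upd_Nil)

lemma not_D_event_2:
  assumes "1 \<le> b"
  shows "not_D_event b d 2
    = - ({\<omega>. \<forall>w\<in>words b d 1 \<union> words b d 2. \<omega> w} \<times> {\<eta>. \<forall>w\<in>words b d 2. \<eta> w})"
proof -
  have "alphabet b d \<noteq> {}"
    using words_nonempty[OF assms, of 1 d] by (auto simp: words_def)
  then have "thinned_gen b d 2 \<omega> \<eta> \<in> Dfam b d 2
      \<longleftrightarrow> (\<forall>w\<in>words b d 1 \<union> words b d 2. \<omega> w) \<and> (\<forall>w\<in>words b d 2. \<eta> w)" for \<omega> \<eta>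
    by (auto simp: thinned_gen_in_Dfam_iff numeral_2_eq_2 ball_Un ball_words_Suc words_0
        Cons_in_thinned_gen_Suc_iff Nil_in_thinned_gen_0_iff subtree_def)
  then show ?thesis
    by (auto simp: not_D_event_def)
qed

section \<open>Iterating the offspring generating function\<close>

lemma fixpoint_between:
  fixes f :: "real \<Rightarrow> real"
  assumes "\<And>x. isCont f x" and "a \<le> b" and "a \<le> f a" and "f b \<le> b"
  obtains c where "a \<le> c" "c \<le> b" "f c = c"
proof -
  have "continuous_on {a..b} (\<lambda>x. f x - x)"
    using assms(1) by (intro continuous_at_imp_continuous_on continuous_intros) auto
  then obtain c where "a \<le> c" "c \<le> b" "f c - c = 0"
    using IVT2'[of "\<lambda>x. f x - x" b 0 a] assms(2-4) by auto
  then show thesis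
    using that by simp
qed

lemma iterates_from_0_tendsto_fixpoint:
  fixes f :: "real \<Rightarrow> real"
  assumes mono: "\<And>x y. 0 \<le> x \<Longrightarrow> x \<le> y \<Longrightarrow> y \<le> 1 \<Longrightarrow> f x \<le> f y"
    and range: "\<And>x. 0 \<le> x \<Longrightarrow> x \<le> 1 \<Longrightarrow> 0 \<le> f x \<and> f x \<le> 1"
    and cont: "\<And>x. isCont f x"
  obtains \<rho> where "(\<lambda>n. (f ^^ n) 0) \<longlonglongrightarrow> \<rho>" "0 \<le> \<rho>" "f \<rho> = \<rho>"
proof -
  define u where "u n = (f ^^ n) 0" for n
  have u_range: "0 \<le> u n \<and> u n \<le> 1" for n
    by (induction n) (simp_all add: u_def range)
  have "u n \<le> u (Suc n)" for n
  proof (induction n)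
    case 0
    then show ?case using range[of 0] by (simp add: u_def)
  next
    case (Suc n)
    then show ?case
      using mono[of "u n" "u (Suc n)"] u_range[of n] u_range[of "Suc n"] by (simp add: u_def)
  qed
  then have "incseq u"
    by (simp add: incseq_Suc_iff)
  then obtain \<rho> where lim: "u \<longlonglongrightarrow> \<rho>"
    using incseq_convergent[of u 1] u_range by blast
  have "0 \<le> \<rho>"
    using u_range by (auto intro: LIMSEQ_le_const[OF lim])
  have "(\<lambda>n. u (Suc n)) \<longlonglongrightarrow> f \<rho>"
    using isCont_tendsto_compose[OF cont lim] by (simp add: u_def)
  then have "f \<rho> = \<rho>"
    using lim LIMSEQ_Suc LIMSEQ_unique by blast
  then show thesis
    using that lim \<open>0 \<le> \<rho>\<close> by (simp add: u_def[abs_def])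
qed

lemma iterates_tendsto_fixpoint_from_above:
  fixes f :: "real \<Rightarrow> real"
  assumes mono: "\<And>x y. 0 \<le> x \<Longrightarrow> x \<le> y \<Longrightarrow> y \<le> 1 \<Longrightarrow> f x \<le> f y"
    and cont: "\<And>x. isCont f x"
    and fixpoint: "f \<rho> = \<rho>" and "0 \<le> \<rho>"
    and below: "\<And>x. \<rho> < x \<Longrightarrow> x < 1 \<Longrightarrow> f x < x"
    and x0: "\<rho> \<le> x0" "x0 < 1"
  shows "(\<lambda>n. (f ^^ n) x0) \<longlonglongrightarrow> \<rho>"
proof -
  define v where "v n = (f ^^ n) x0" for n
  have v_bounds: "\<rho> \<le> v n \<and> v n \<le> x0" for n
  proof (induction n)
    case 0
    then show ?case using x0 by (simp add: v_def)
  next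
    case (Suc n)
    have "\<rho> \<le> f (v n)" and "f (v n) \<le> v n"
      using mono[of \<rho> "v n"] below[of "v n"] Suc x0 \<open>0 \<le> \<rho>\<close> fixpoint
      by (cases "v n = \<rho>"; force)+
    then show ?case using Suc by (simp add: v_def)
  qed
  have "v (Suc n) \<le> v n" for n
    using below[of "v n"] v_bounds[of n] x0 fixpoint by (cases "v n = \<rho>") (auto simp: v_def)
  then have "decseq v"
    by (simp add: decseq_Suc_iff)
  then obtain L where lim: "v \<longlonglongrightarrow> L"
    using decseq_convergent[of v \<rho>] v_bounds by blast
  have "\<rho> \<le> L" "L \<le> x0"
    using v_bounds by (auto intro: LIMSEQ_le_const[OF lim] LIMSEQ_le_const2[OF lim])
  have "(\<lambda>n. v (Suc n)) \<longlonglongrightarrow> f L"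
    using isCont_tendsto_compose[OF cont lim] by (simp add: v_def)
  then have "f L = L"
    using lim LIMSEQ_Suc LIMSEQ_unique by blast
  then have "L = \<rho>"
    using below[of L] \<open>\<rho> \<le> L\<close> \<open>L \<le> x0\<close> x0 by force
  then show ?thesis
    using lim by (simp add: v_def[abs_def])
qed

lemma iterates_tendsto_attracting_fixpoint:
  fixes f :: "real \<Rightarrow> real"
  assumes mono: "\<And>x y. 0 \<le> x \<Longrightarrow> x \<le> y \<Longrightarrow> y \<le> 1 \<Longrightarrow> f x \<le> f y"
    and cont: "\<And>x. isCont f x"
    and range: "\<And>x. 0 \<le> x \<Longrightarrow> x \<le> 1 \<Longrightarrow> 0 \<le> f x \<and> f x \<le> 1"
    and lim0: "(\<lambda>n. (f ^^ n) 0) \<longlonglongrightarrow> \<rho>" and fixpoint: "f \<rho> = \<rho>" and "0 \<le> \<rho>"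
    and below: "\<And>x. \<rho> < x \<Longrightarrow> x < 1 \<Longrightarrow> f x < x"
    and x0: "0 \<le> x0" "x0 < 1"
  shows "(\<lambda>n. (f ^^ n) x0) \<longlonglongrightarrow> \<rho>"
proof (cases "x0 \<le> \<rho>")
  case True
  have iterates_0_range: "0 \<le> (f ^^ n) 0 \<and> (f ^^ n) 0 \<le> 1" for n
    by (induction n) (simp_all add: range)
  then have "\<rho> \<le> 1"
    by (intro LIMSEQ_le_const2[OF lim0]) auto
  have "(f ^^ n) 0 \<le> (f ^^ n) x0 \<and> (f ^^ n) x0 \<le> \<rho>" for n
  proof (induction n)
    case 0
    then show ?case using True x0 by simp
  next
    case (Suc n)
    then show ?case
      using mono[of "(f ^^ n) 0" "(f ^^ n) x0"] mono[of "(f ^^ n) x0" \<rho>] iterates_0_range[of n]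
        \<open>\<rho> \<le> 1\<close> fixpoint
      by auto
  qed
  then show ?thesis
    by (intro tendsto_sandwich[OF _ _ lim0 tendsto_const]) auto
next
  case False
  then show ?thesis
    using iterates_tendsto_fixpoint_from_above[OF mono cont fixpoint \<open>0 \<le> \<rho>\<close> below] x0 by simp
qed

definition binomial_pgf :: "real \<Rightarrow> nat \<Rightarrow> real \<Rightarrow> real" where
  "binomial_pgf p N x = (1 - p + p * x) ^ N"

lemma binomial_pgf_1 [simp]: "binomial_pgf p N 1 = 1"
  by (simp add: binomial_pgf_def)

lemma isCont_binomial_pgf: "isCont (binomial_pgf p N) x"
  unfolding binomial_pgf_def by (intro continuous_intros)

lemma binomial_pgf_mono:
  assumes "0 \<le> p" "p \<le> 1" "0 \<le> x" "x \<le> y"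
  shows "binomial_pgf p N x \<le> binomial_pgf p N y"
  unfolding binomial_pgf_def using assms
  by (intro power_mono) (auto intro: mult_left_mono add_nonneg_nonneg)

lemma binomial_pgf_range:
  assumes "0 \<le> p" "p \<le> 1" "0 \<le> x" "x \<le> 1"
  shows "0 \<le> binomial_pgf p N x \<and> binomial_pgf p N x \<le> 1"
proof -
  have "0 \<le> 1 - p + p * x" "1 - p + p * x \<le> 1"
    using assms mult_left_le[of x p] by auto
  then show ?thesis
    by (simp add: binomial_pgf_def power_le_one)
qed

lemma has_real_derivative_binomial_pgf:
  "(binomial_pgf p N has_real_derivative real N * p * (1 - p + p * x) ^ (N - 1)) (at x)"
  unfolding binomial_pgf_def by (auto intro!: derivative_eq_intros)

lemma binomial_pgf_below_diagonal_near_1: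
  assumes "p * real N > 1" and "x < 1"
  obtains y where "x < y" "y < 1" "binomial_pgf p N y < y"
proof -
  have "((\<lambda>x. binomial_pgf p N x - x) has_real_derivative p * real N - 1) (at 1)"
    using has_real_derivative_binomial_pgf[of p N 1] by (auto intro!: derivative_eq_intros)
  from DERIV_pos_inc_left[OF this] obtain \<delta> where "\<delta> > 0"
    and \<delta>: "\<And>t. 0 < t \<Longrightarrow> t < \<delta> \<Longrightarrow> binomial_pgf p N (1 - t) < 1 - t"
    using assms(1) by auto
  define t where "t = min (\<delta> / 2) ((1 - x) / 2)"
  have "0 < t" "t < \<delta>" "t < 1 - x"
    using \<open>\<delta> > 0\<close> assms(2) by (auto simp: t_def min_def)
  then show thesis
    using that[of "1 - t"] \<delta>[of t] by simp
qed

text \<open>By strict convexity, two fixed points below 1 would give, by Rolle's theorem applied on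
  both sides of the larger one, two points where the strictly increasing derivative equals 1.\<close>
lemma binomial_pgf_fixpoint_below_1_unique:
  assumes p: "0 < p" "p \<le> 1" and "2 \<le> N"
    and a: "0 \<le> a" "binomial_pgf p N a = a" and c: "a < c" "c < 1" "binomial_pgf p N c = c"
  shows False
proof -
  define h where "h x = binomial_pgf p N x - x" for x
  define f' where "f' x = real N * p * (1 - p + p * x) ^ (N - 1)" for x
  have deriv: "(h has_real_derivative f' x - 1) (at x)" for x
    unfolding h_def f'_def by (auto intro!: derivative_eq_intros has_real_derivative_binomial_pgf)
  then have diff: "h differentiable (at x)" for x
    using real_differentiable_def by blast
  have cont: "continuous_on {x..y} h" for x y
    unfolding h_def
    by (intro continuous_at_imp_continuous_on ballI isCont_diff isCont_binomial_pgf continuous_ident)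
  obtain x1 where "a < x1" "x1 < c" and x1: "DERIV h x1 :> 0"
    using Rolle[OF \<open>a < c\<close> _ cont diff] a c by (auto simp: h_def)
  moreover obtain x2 where "c < x2" "x2 < 1" and x2: "DERIV h x2 :> 0"
    using Rolle[OF \<open>c < 1\<close> _ cont diff] c by (auto simp: h_def)
  ultimately have "f' x1 = f' x2"
    using DERIV_unique[OF deriv x1] DERIV_unique[OF deriv x2] by simp
  moreover have "(1 - p + p * x1) ^ (N - 1) < (1 - p + p * x2) ^ (N - 1)"
    using \<open>2 \<le> N\<close> p a \<open>a < x1\<close> \<open>x1 < c\<close> \<open>c < x2\<close>
    by (intro power_strict_mono) auto
  ultimately show False
    using p \<open>2 \<le> N\<close> by (simp add: f'_def)
qed

lemma binomial_pgf_below_diagonal: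
  assumes "0 \<le> p" "p \<le> 1" "p * real N > 1"
    and "0 \<le> \<rho>" "binomial_pgf p N \<rho> = \<rho>" and "\<rho> < x" "x < 1"
  shows "binomial_pgf p N x < x"
proof (rule ccontr)
  assume "\<not> binomial_pgf p N x < x"
  obtain y where "x < y" "y < 1" "binomial_pgf p N y < y"
    using binomial_pgf_below_diagonal_near_1 assms(3,7) by blast
  then obtain z where "x \<le> z" "z \<le> y" "binomial_pgf p N z = z"
    using fixpoint_between[of "binomial_pgf p N" x y] isCont_binomial_pgf \<open>\<not> binomial_pgf p N x < x\<close>
    by (metis less_imp_le not_less)
  moreover have "0 < p"
    using assms(1,3) by (cases "p = 0") auto
  moreover have "2 \<le> N"
  proof (rule ccontr)
    assume "\<not> 2 \<le> N"
    then have "real N \<le> 1"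
      by simp
    then show False
      using assms(1-3) mult_left_le[of "real N" p] by simp
  qed
  ultimately show False
    using binomial_pgf_fixpoint_below_1_unique[of p N \<rho> z] assms \<open>y < 1\<close> by simp
qed

lemma binomial_pgf_iterates_tendsto:
  assumes p: "0 \<le> p" "p \<le> 1" "p * real N > 1"
    and lim0: "(\<lambda>n. (binomial_pgf p N ^^ n) 0) \<longlonglongrightarrow> \<rho>" and x: "0 \<le> x" "x < 1"
  shows "(\<lambda>n. (binomial_pgf p N ^^ n) x) \<longlonglongrightarrow> \<rho>"
proof -
  note mono = binomial_pgf_mono[OF p(1,2)] and range = binomial_pgf_range[OF p(1,2)]
  obtain \<rho>' where lim0': "(\<lambda>n. (binomial_pgf p N ^^ n) 0) \<longlonglongrightarrow> \<rho>'"
    and "0 \<le> \<rho>'" "binomial_pgf p N \<rho>' = \<rho>'"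
    using iterates_from_0_tendsto_fixpoint[of "binomial_pgf p N"] mono range isCont_binomial_pgf
    by blast
  moreover have "\<rho>' = \<rho>"
    using lim0 lim0' LIMSEQ_unique by blast
  ultimately show ?thesis
    using iterates_tendsto_attracting_fixpoint[of "binomial_pgf p N" \<rho> x] mono range
      isCont_binomial_pgf binomial_pgf_below_diagonal[OF p] x lim0
    by blast
qed

section \<open>Extinction and the thinned generations\<close>

lemma sets_gw_gen_eq_empty: "{\<omega>. gw_gen b d \<omega> n = {}} \<in> sets (bernoulli_field p)"
proof -
  have "Measurable.pred (bernoulli_field p) (\<lambda>\<omega>. gw_gen b d \<omega> n = {})"
  proof (induction n)
    case (Suc n)
    note [measurable] = Suc.IH
    show ?case
      unfolding gw_gen_Suc_eq_empty_iff using finite_alphabet by measurable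
  qed simp
  then show ?thesis
    by (simp add: pred_def)
qed

text \<open>The extinction events involve only the tree; they are paired with a dummy second
  coordinate so that measure_branch_event applies.\<close>
lemma measure_gw_gen_eq_empty:
  assumes "0 \<le> p" "p \<le> 1"
  shows "measure (bernoulli_field p) {\<omega>. gw_gen b d \<omega> n = {}} = (binomial_pgf p (b ^ d) ^^ n) 0"
proof -
  define M :: "((nat list list \<Rightarrow> bool) \<times> (nat list list \<Rightarrow> bool)) measure"
    where "M = bernoulli_field p \<Otimes>\<^sub>M bernoulli_field p"
  define A where "A n = {\<omega>. gw_gen b d \<omega> n = {}} \<times> (UNIV :: (nat list list \<Rightarrow> bool) set)" for n
  interpret Q: prob_space "bernoulli_field p :: (nat list list \<Rightarrow> bool) measure"
    by (rule prob_space_bernoulli_field)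
  have sets_A: "A n \<in> sets M" for n
    unfolding A_def M_def by (intro pair_measureI sets_gw_gen_eq_empty) simp
  have measure_A: "measure M (A n) = measure (bernoulli_field p) {\<omega>. gw_gen b d \<omega> n = {}}" for n
    using Q.emeasure_pair_measure_Times[OF sets_gw_gen_eq_empty[of b d n p] UNIV_in_sets_bernoulli_field]
    by (simp add: A_def M_def measure_def)
  have "measure M (A n) = (binomial_pgf p (b ^ d) ^^ n) 0" for n
  proof (induction n)
    case (Suc n)
    have "A (Suc n) = branch_event (alphabet b d) (A n)"
      by (auto simp: A_def branch_event_def gw_gen_Suc_eq_empty_iff simp del: gw_gen.simps)
    then show ?case
      using measure_branch_event[OF finite_alphabet assms sets_A[unfolded M_def]] Suc
      by (simp add: M_def A_def gw_gen_fun_upd_Nil card_alphabet binomial_pgf_def)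
  qed (simp add: A_def)
  then show ?thesis
    by (simp add: measure_A)
qed

lemma iterates_binomial_pgf_tendsto_extinction_prob:
  assumes "0 \<le> p" "p \<le> 1"
  shows "(\<lambda>n. (binomial_pgf p (b ^ d) ^^ n) 0) \<longlonglongrightarrow> extinction_prob b d p"
proof -
  interpret prob_space "bernoulli_field p :: (nat list list \<Rightarrow> bool) measure"
    by (rule prob_space_bernoulli_field)
  have "incseq (\<lambda>n. {\<omega>. gw_gen b d \<omega> n = {}})"
    by (rule incseq_SucI) auto
  then have "(\<lambda>n. measure (bernoulli_field p) {\<omega>. gw_gen b d \<omega> n = {}})
      \<longlonglongrightarrow> measure (bernoulli_field p) (\<Union>n. {\<omega>. gw_gen b d \<omega> n = {}})"
    by (intro finite_Lim_measure_incseq) (auto simp: sets_gw_gen_eq_empty)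
  moreover have "(\<Union>n. {\<omega>. gw_gen b d \<omega> n = {}}) = {\<omega>. \<exists>n. gw_gen b d \<omega> n = {}}"
    by blast
  moreover have "extinction_prob b d p = measure (bernoulli_field p) {\<omega>. \<exists>n. gw_gen b d \<omega> n = {}}"
    by (simp add: extinction_prob_def gw_space_def bernoulli_field_def)
  ultimately show ?thesis
    by (simp add: measure_gw_gen_eq_empty assms)
qed

lemma gD_eq_measure_not_D_event:
  "gD b d p k s = measure (bernoulli_field p \<Otimes>\<^sub>M bernoulli_field (1 - s)) (not_D_event b d k)"
  by (simp add: gD_def gw_space_def Y_space_def bernoulli_field_def not_D_event_def thinned_gen_def)

lemma sets_not_D_event_2:
  assumes "1 \<le> b"
  shows "not_D_event b d 2 \<in> sets (bernoulli_field p \<Otimes>\<^sub>M bernoulli_field q)"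
proof -
  have "finite (words b d 1 \<union> words b d 2)"
    by (simp add: finite_words)
  then have "space (bernoulli_field p \<Otimes>\<^sub>M bernoulli_field q)
      - {\<omega>. \<forall>w\<in>words b d 1 \<union> words b d 2. \<omega> w} \<times> {\<eta>. \<forall>w\<in>words b d 2. \<eta> w}
      \<in> sets (bernoulli_field p \<Otimes>\<^sub>M bernoulli_field q)"
    by (intro sets.compl_sets pair_measureI sets_bernoulli_field_cylinder finite_words)
  then show ?thesis
    by (simp add: not_D_event_2[OF assms] space_pair_measure Compl_eq_Diff_UNIV)
qed

lemma measure_not_D_event_2_less_1:
  assumes "1 \<le> b" and p: "0 < p" "p \<le> 1" and q: "0 < q" "q \<le> 1"
  shows "measure (bernoulli_field p \<Otimes>\<^sub>M bernoulli_field q) (not_D_event b d 2) < 1"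
proof -
  interpret Q: prob_space "bernoulli_field q :: (nat list list \<Rightarrow> bool) measure"
    by (rule prob_space_bernoulli_field)
  interpret PQ: prob_space "bernoulli_field p \<Otimes>\<^sub>M bernoulli_field q :: ((nat list list \<Rightarrow> bool) \<times> (nat list list \<Rightarrow> bool)) measure"
    by (intro prob_space_pair prob_space_bernoulli_field)
  define W where "W = words b d 1 \<union> words b d 2"
  define C1 where "C1 = {\<omega>::nat list list \<Rightarrow> bool. \<forall>w\<in>W. \<omega> w}"
  define C2 where "C2 = {\<eta>::nat list list \<Rightarrow> bool. \<forall>w\<in>words b d 2. \<eta> w}"
  have "finite W"
    by (simp add: W_def finite_words)
  then have sets_C: "C1 \<in> sets (bernoulli_field p)" "C2 \<in> sets (bernoulli_field q)"
    unfolding C1_def C2_def by (simp_all add: sets_bernoulli_field_cylinder finite_words)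
  have "emeasure (bernoulli_field p \<Otimes>\<^sub>M bernoulli_field q) (C1 \<times> C2)
      = ennreal (p ^ card W) * ennreal (q ^ card (words b d 2))"
    using Q.emeasure_pair_measure_Times[OF sets_C] \<open>finite W\<close> p q
    by (simp add: C1_def C2_def finite_words emeasure_bernoulli_field_cylinder ennreal_power)
  then have "0 < measure (bernoulli_field p \<Otimes>\<^sub>M bernoulli_field q) (C1 \<times> C2)"
    using p q by (simp add: PQ.emeasure_eq_measure flip: ennreal_mult)
  then show ?thesis
    using PQ.prob_compl[OF pair_measureI[OF sets_C]]
    by (simp add: not_D_event_2[OF \<open>1 \<le> b\<close>] C1_def C2_def W_def space_pair_measure Compl_eq_Diff_UNIV)
qed

lemma measure_not_D_event:
  assumes "1 \<le> b" "0 \<le> p" "p \<le> 1"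
  shows "not_D_event b d (m + 2) \<in> sets (bernoulli_field p \<Otimes>\<^sub>M bernoulli_field q)
    \<and> measure (bernoulli_field p \<Otimes>\<^sub>M bernoulli_field q) (not_D_event b d (m + 2))
      = (binomial_pgf p (b ^ d) ^^ m) (measure (bernoulli_field p \<Otimes>\<^sub>M bernoulli_field q) (not_D_event b d 2))"
proof (induction m)
  case 0
  then show ?case
    using sets_not_D_event_2[OF assms(1), of d p q] by (simp add: numeral_2_eq_2)
next
  case (Suc m)
  then show ?case
    using not_D_event_Suc[of "m + 2" b d] assms sets_branch_event[OF finite_alphabet]
      measure_branch_event[OF finite_alphabet assms(2,3)]
    by (simp add: fun_upd_Nil_in_not_D_event_iff card_alphabet binomial_pgf_def)
qed

theorem lemma4p7:
  fixes b d :: nat and p s :: real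
  assumes "b \<ge> 2" and "d \<ge> 1"
    and "0 \<le> p" and "p \<le> 1"
    and "p * real b ^ d > 1"
    and "0 < s" and "s < 1"
  shows "(\<lambda>k. gD b d p k s) \<longlonglongrightarrow> extinction_prob b d p"
proof -
  let ?M = "bernoulli_field p \<Otimes>\<^sub>M bernoulli_field (1 - s)
    :: ((nat list list \<Rightarrow> bool) \<times> (nat list list \<Rightarrow> bool)) measure"
  have "0 < p"
    using assms(3,5) by (cases "p = 0") auto
  moreover have "1 \<le> b" "0 < 1 - s" "1 - s \<le> 1" "p * real (b ^ d) > 1"
    using assms by auto
  ultimately have "measure ?M (not_D_event b d 2) < 1"
    using \<open>p \<le> 1\<close> by (intro measure_not_D_event_2_less_1)
  then have "(\<lambda>m. (binomial_pgf p (b ^ d) ^^ m) (measure ?M (not_D_event b d 2)))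
      \<longlonglongrightarrow> extinction_prob b d p"
    using \<open>p * real (b ^ d) > 1\<close> \<open>0 \<le> p\<close> \<open>p \<le> 1\<close>
      binomial_pgf_iterates_tendsto[OF _ _ _ iterates_binomial_pgf_tendsto_extinction_prob]
    by simp
  then have "(\<lambda>m. gD b d p (m + 2) s) \<longlonglongrightarrow> extinction_prob b d p"
    using measure_not_D_event[OF \<open>1 \<le> b\<close> \<open>0 \<le> p\<close> \<open>p \<le> 1\<close>]
    by (simp add: gD_eq_measure_not_D_event)
  then show ?thesis
    by (rule LIMSEQ_offset)
qed

end
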